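(* For the system $$\dot x=-y+x(x^3+xy^2)+\sum_{k=1}^2\varepsilon^k\Big(\lambda_kx+\sum_{i+j=4}a_{k,i,j}x^iy^j\Big),\qquad \dot y=x+y(x^3+xy^2)+\sum_{k=1}^2\varepsilon^k\Big(\lambda_ky+\sum_{i+j=4}b_{k,i,j}x^iy^j\Big)$$ with real coefficients, the first order averaged function satisfies $f_1(z)\equiv0$ on $D=(0,3^{-1/3})$ if and only if $a_{1,1,3}=b_{1,0,4}$, $a_{1,3,1}=b_{1,2,2}$, and $b_{1,4,0}=\lambda_1=0$.
   Context: Averaging framework (first order): in polar coordinates $x=r\cos\theta,y=r\sin\theta$, write $dr/d\theta=F_0(\theta,r)+\varepsilon F_1(\theta,r)+O(\varepsilon^2)$. Here $F_0=r^4\cos\theta$, its solution with $r(0)=z$ is $r(\theta,z)=z(1-3z^3\sin\theta)^{-1/3}$, $2\pi$-periodic and positive for $z\in D=(0,3^{-1/3})$, and $Y(\theta,z)=(1-3z^3\sin\theta)^{-4/3}$ solves $Y'=\partial_rF_0(\theta,r(\theta,z))Y$, $Y(0,z)=1$. The first order averaged function is $f_1(z)=Y(2\pi,z)\int_0^{2\pi}Y(s,z)^{-1}F_1(s,r(s,z))\,ds$. *)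

theory Defs
  imports "HOL-Analysis.Analysis"
begin

definition Ppert :: "(nat \<Rightarrow> real) \<Rightarrow> (nat \<Rightarrow> nat \<Rightarrow> nat \<Rightarrow> real) \<Rightarrow> nat \<Rightarrow> real \<Rightarrow> real \<Rightarrow> real" where
  "Ppert lam a k x y = lam k * x + (\<Sum>i\<le>4. a k i (4 - i) * x ^ i * y ^ (4 - i))"

definition Qpert :: "(nat \<Rightarrow> real) \<Rightarrow> (nat \<Rightarrow> nat \<Rightarrow> nat \<Rightarrow> real) \<Rightarrow> nat \<Rightarrow> real \<Rightarrow> real \<Rightarrow> real" where
  "Qpert lam b k x y = lam k * y + (\<Sum>i\<le>4. b k i (4 - i) * x ^ i * y ^ (4 - i))"

text \<open>First order term of dr/dtheta in polar coordinates:
  dr/dt = r^4 cos t + eps (x P1 + y Q1)/r, dtheta/dt = 1 + eps (x Q1 - y P1)/r^2, hence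
  F1 = (x P1 + y Q1)/r - r^4 cos theta (x Q1 - y P1)/r^2.\<close>
definition F1 :: "(nat \<Rightarrow> real) \<Rightarrow> (nat \<Rightarrow> nat \<Rightarrow> nat \<Rightarrow> real) \<Rightarrow> (nat \<Rightarrow> nat \<Rightarrow> nat \<Rightarrow> real)
    \<Rightarrow> real \<Rightarrow> real \<Rightarrow> real" where
  "F1 lam a b \<theta> r =
     (let x = r * cos \<theta>; y = r * sin \<theta>;
          P = Ppert lam a 1 x y; Q = Qpert lam b 1 x y
      in (x * P + y * Q) / r - r ^ 4 * cos \<theta> * (x * Q - y * P) / r ^ 2)"

definition rsol :: "real \<Rightarrow> real \<Rightarrow> real" where
  "rsol \<theta> z = z * (1 - 3 * z ^ 3 * sin \<theta>) powr (-1/3)"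

definition Ysol :: "real \<Rightarrow> real \<Rightarrow> real" where
  "Ysol \<theta> z = (1 - 3 * z ^ 3 * sin \<theta>) powr (-4/3)"

definition f1 :: "(nat \<Rightarrow> real) \<Rightarrow> (nat \<Rightarrow> nat \<Rightarrow> nat \<Rightarrow> real) \<Rightarrow> (nat \<Rightarrow> nat \<Rightarrow> nat \<Rightarrow> real)
    \<Rightarrow> real \<Rightarrow> real" where
  "f1 lam a b z = Ysol (2 * pi) z *
     integral {0..2 * pi} (\<lambda>s. inverse (Ysol s z) * F1 lam a b s (rsol s z))"

end

theory Submission
  imports Defs
begin

text \<open>
  In polar coordinates the first order term is \<open>F\<^sub>1 = \<lambda> r + r\<^sup>4 R(\<theta>) - r\<^sup>7 A(\<theta>)\<close>,
  with trigonometric forms \<open>R\<close>, \<open>A\<close> built from the quartic perturbations. Along the unperturbed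
  orbit the integrand of \<open>f\<^sub>1\<close> becomes \<open>\<lambda> z (1 - k sin \<theta>) + z\<^sup>4 R(\<theta>) - z\<^sup>7 A(\<theta>) / (1 - k sin \<theta>)\<close>
  with \<open>k = 3 z\<^sup>3\<close>. After replacing \<open>cos\<^sup>2\<close> by \<open>1 - sin\<^sup>2\<close>, every term except the part
  \<open>E(sin \<theta>)\<close> of \<open>A\<close> that is even in \<open>cos \<theta>\<close> has the shape \<open>cos \<theta> \<phi>(sin \<theta>)\<close> or
  \<open>sin \<theta> \<psi>(cos \<theta>)\<close> and integrates to zero over a period, so
  \<open>f\<^sub>1(z) = 2\<pi> \<lambda> z - z\<^sup>7 \<integral> E(sin \<theta>) / (1 - k sin \<theta>) d\<theta>\<close>.
  Letting \<open>z \<rightarrow> 0\<close> separates \<open>\<lambda>\<close>. If the remaining integral vanishes for all small \<open>k\<close>,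
  expanding \<open>1 / (1 - k sin \<theta>)\<close> as a geometric series shows that all moments
  \<open>\<integral> E(sin \<theta>) sin\<^sup>j \<theta> d\<theta>\<close> vanish; as \<open>E\<close> is a polynomial, this gives
  \<open>\<integral> E(sin \<theta>)\<^sup>2 d\<theta> = 0\<close>, hence \<open>E = 0\<close>, which is exactly the stated set of
  coefficient conditions.
\<close>

section \<open>Moments of resolvent-type integrals\<close>

lemma eq_0_if_eventually_abs_le:
  fixes x K :: real
  assumes "\<forall>\<^sub>F y in at_right 0. \<bar>x\<bar> \<le> K * y"
  shows "x = 0"
proof -
  have "((\<lambda>y. K * y) \<longlongrightarrow> K * 0) (at_right 0)"
    by (intro tendsto_intros)
  from tendsto_le[OF trivial_limit_at_right_real this tendsto_const assms]
  show ?thesis by simp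
qed

lemma poly_coeffs_eq_0_if_eventually_bounded:
  fixes c :: "nat \<Rightarrow> real"
  assumes "\<forall>\<^sub>F y in at_right 0. \<bar>\<Sum>i<n. c i * y ^ i\<bar> \<le> C * y ^ n"
    and "i < n"
  shows "c i = 0"
  using assms
proof (induction n arbitrary: c i)
  case 0
  then show ?case by simp
next
  case (Suc n)
  have split: "(\<Sum>i<Suc n. c i * y ^ i) = c 0 + y * (\<Sum>i<n. c (Suc i) * y ^ i)" for y
    by (simp add: sum.lessThan_Suc_shift sum_distrib_left algebra_simps del: sum.lessThan_Suc)
  have near0: "\<forall>\<^sub>F y in at_right 0. y \<in> {0<..<(1::real)}"
    by (rule eventually_at_right_real) simp
  define S where "S = (\<Sum>i<n. \<bar>c (Suc i)\<bar>)"
  have "\<forall>\<^sub>F y in at_right 0. \<bar>c 0\<bar> \<le> (\<bar>C\<bar> + S) * y"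
    using Suc.prems(1) near0
  proof eventually_elim
    case (elim y)
    then have y: "0 < y" "y < 1" by auto
    have "\<bar>\<Sum>i<n. c (Suc i) * y ^ i\<bar> \<le> (\<Sum>i<n. \<bar>c (Suc i)\<bar> * y ^ i)"
      using sum_abs[of "\<lambda>i. c (Suc i) * y ^ i" "{..<n}"] y by (simp add: abs_mult)
    also have "\<dots> \<le> S"
      unfolding S_def using y by (intro sum_mono mult_left_le power_le_one) auto
    finally have "\<bar>y * (\<Sum>i<n. c (Suc i) * y ^ i)\<bar> \<le> y * S"
      using y by (simp add: abs_mult mult_left_mono)
    moreover have "C * y ^ Suc n \<le> \<bar>C\<bar> * y"
    proof -
      have "y ^ n \<le> 1"
        using y by (simp add: power_le_one)
      have "C * y ^ Suc n \<le> \<bar>C\<bar> * y ^ Suc n"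
        using y by (intro mult_right_mono) auto
      also have "\<dots> \<le> \<bar>C\<bar> * y"
        using \<open>y ^ n \<le> 1\<close> y by (intro mult_left_mono) (auto simp: mult_left_le)
      finally show ?thesis .
    qed
    ultimately show ?case
      using elim(1) unfolding split by (simp add: algebra_simps)
  qed
  then have c0: "c 0 = 0"
    by (rule eq_0_if_eventually_abs_le)
  have "\<forall>\<^sub>F y in at_right 0. \<bar>\<Sum>i<n. c (Suc i) * y ^ i\<bar> \<le> C * y ^ n"
    using Suc.prems(1) near0
  proof eventually_elim
    case (elim y)
    then have "y * \<bar>\<Sum>i<n. c (Suc i) * y ^ i\<bar> \<le> y * (C * y ^ n)"
      unfolding split c0 by (simp add: abs_mult algebra_simps)
    with elim show ?case by simp
  qed
  then have "c (Suc j) = 0" if "j < n" for j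
    using Suc.IH[of "\<lambda>j. c (Suc j)"] that by blast
  with c0 \<open>i < Suc n\<close> show ?case
    by (cases i) auto
qed

lemma resolvent_integral_bounded:
  fixes g h :: "real \<Rightarrow> real"
  assumes "a \<le> b" "continuous_on {a..b} g" "continuous_on {a..b} h"
    and "\<And>t. t \<in> {a..b} \<Longrightarrow> \<bar>h t\<bar> \<le> 1"
  obtains C where "\<And>k. 0 \<le> k \<Longrightarrow> k \<le> 1/2 \<Longrightarrow>
    \<bar>integral {a..b} (\<lambda>t. g t / (1 - k * h t))\<bar> \<le> C"
proof -
  obtain M where M: "\<And>t. t \<in> {a..b} \<Longrightarrow> \<bar>g t\<bar> \<le> M"
    using continuous_on_compact_bound[OF compact_Icc assms(2)] by auto
  have "\<bar>integral {a..b} (\<lambda>t. g t / (1 - k * h t))\<bar> \<le> 2 * M * (b - a)"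
    if k: "0 \<le> k" "k \<le> 1/2" for k
  proof -
    have half: "1/2 \<le> 1 - k * h t" if "t \<in> {a..b}" for t
    proof -
      have "k * h t \<le> k"
        using k assms(4)[OF that] by (intro mult_left_le) (auto simp: abs_le_iff)
      with k show ?thesis by linarith
    qed
    have "norm (integral {a..b} (\<lambda>t. g t / (1 - k * h t))) \<le> 2 * M * (b - a)"
    proof (rule integral_bound[OF assms(1)])
      show "continuous_on {a..b} (\<lambda>t. g t / (1 - k * h t))"
      proof (intro continuous_intros assms(2,3) ballI)
        show "1 - k * h t \<noteq> 0" if "t \<in> {a..b}" for t
          using half[OF that] by linarith
      qed
      fix t assume "t \<in> {a..b}"
      then have "\<bar>g t\<bar> / (1 - k * h t) \<le> M / (1/2)"
        using half[of t] M[of t] by (intro frac_le) auto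
      with half[of t] \<open>t \<in> {a..b}\<close> show "norm (g t / (1 - k * h t)) \<le> 2 * M"
        by (simp add: abs_divide)
    qed
    then show ?thesis by simp
  qed
  then show thesis by (rule that)
qed

lemma integral_resolvent_expansion:
  fixes g h :: "real \<Rightarrow> real"
  assumes "continuous_on {a..b} g" "continuous_on {a..b} h"
    and "\<And>t. t \<in> {a..b} \<Longrightarrow> k * h t \<noteq> 1"
  shows "integral {a..b} (\<lambda>t. g t / (1 - k * h t)) =
    (\<Sum>i<n. integral {a..b} (\<lambda>t. g t * h t ^ i) * k ^ i)
    + k ^ n * integral {a..b} (\<lambda>t. g t * h t ^ n / (1 - k * h t))"
proof -
  have expand: "g t / (1 - k * h t) =
      (\<Sum>i<n. g t * h t ^ i * k ^ i) + k ^ n * (g t * h t ^ n / (1 - k * h t))"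
    if "t \<in> {a..b}" for t
  proof -
    define q where "q = k * h t"
    have "1 - q \<noteq> 0"
      using assms(3)[OF that] by (simp add: q_def)
    then have "1 / (1 - q) = (\<Sum>i<n. q ^ i) + q ^ n / (1 - q)"
      by (simp add: sum_gp_strict add_divide_distrib[symmetric])
    then have "g t / (1 - q) = g t * ((\<Sum>i<n. q ^ i) + q ^ n / (1 - q))"
      by (metis times_divide_eq_right mult_1_right)
    then show ?thesis
      by (simp add: q_def sum_distrib_left distrib_left power_mult_distrib mult_ac)
  qed
  have "((\<lambda>t. (\<Sum>i<n. g t * h t ^ i * k ^ i) + k ^ n * (g t * h t ^ n / (1 - k * h t)))
      has_integral (\<Sum>i<n. integral {a..b} (\<lambda>t. g t * h t ^ i) * k ^ i)
        + k ^ n * integral {a..b} (\<lambda>t. g t * h t ^ n / (1 - k * h t))) {a..b}"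
    using assms
    by (intro has_integral_add has_integral_sum has_integral_mult_left has_integral_mult_right
        integrable_integral integrable_continuous_interval continuous_intros ballI) auto
  then show ?thesis
    by (intro integral_unique has_integral_eq[OF expand[symmetric]])
qed

lemma moments_vanish_if_resolvent_vanishes:
  fixes g h :: "real \<Rightarrow> real"
  assumes "a \<le> b" "continuous_on {a..b} g" "continuous_on {a..b} h"
    and "\<And>t. t \<in> {a..b} \<Longrightarrow> \<bar>h t\<bar> \<le> 1"
    and "\<forall>\<^sub>F k in at_right 0. integral {a..b} (\<lambda>t. g t / (1 - k * h t)) = 0"
  shows "integral {a..b} (\<lambda>t. g t * h t ^ j) = 0"
proof -
  define n where "n = Suc j"
  have "continuous_on {a..b} (\<lambda>t. g t * h t ^ n)"
    by (intro continuous_intros assms(2,3))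
  then obtain C where C: "\<And>k. 0 \<le> k \<Longrightarrow> k \<le> 1/2 \<Longrightarrow>
      \<bar>integral {a..b} (\<lambda>t. g t * h t ^ n / (1 - k * h t))\<bar> \<le> C"
    using resolvent_integral_bounded[OF assms(1) _ assms(3,4)] by blast
  have near0: "\<forall>\<^sub>F k in at_right 0. k \<in> {0<..<1/2::real}"
    by (rule eventually_at_right_real) simp
  have "\<forall>\<^sub>F k in at_right 0.
      \<bar>\<Sum>i<n. integral {a..b} (\<lambda>t. g t * h t ^ i) * k ^ i\<bar> \<le> C * k ^ n"
    using assms(5) near0
  proof eventually_elim
    case (elim k)
    have "k * h t \<noteq> 1" if "t \<in> {a..b}" for t
    proof -
      have "k * h t \<le> k"
        using elim(2) assms(4)[OF that] by (intro mult_left_le) (auto simp: abs_le_iff)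
      moreover have "k < 1/2"
        using elim(2) by simp
      ultimately show ?thesis by linarith
    qed
    then have "(\<Sum>i<n. integral {a..b} (\<lambda>t. g t * h t ^ i) * k ^ i)
        = - (k ^ n * integral {a..b} (\<lambda>t. g t * h t ^ n / (1 - k * h t)))"
      using elim(1) integral_resolvent_expansion[OF assms(2,3), of k n] by simp
    also have "\<bar>\<dots>\<bar> \<le> k ^ n * C"
      using C[of k] elim(2) by (simp add: abs_mult mult_left_mono)
    finally show ?case
      by (simp add: mult.commute)
  qed
  then show ?thesis
    by (rule poly_coeffs_eq_0_if_eventually_bounded) (simp add: n_def)
qed

lemma vanishes_if_moments_vanish:
  fixes g h :: "real \<Rightarrow> real" and c :: "nat \<Rightarrow> real"
  assumes "a < b" "continuous_on {a..b} g" "continuous_on {a..b} h"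
    and poly: "\<And>t. t \<in> {a..b} \<Longrightarrow> g t = (\<Sum>i<n. c i * h t ^ i)"
    and moments: "\<And>i. integral {a..b} (\<lambda>t. g t * h t ^ i) = 0"
    and "t \<in> {a..b}"
  shows "g t = 0"
proof -
  have "((\<lambda>t. g t * h t ^ i) has_integral 0) {a..b}" for i
    using integrable_integral[OF integrable_continuous_interval, of a b "\<lambda>t. g t * h t ^ i"]
    by (simp add: moments continuous_intros assms(2,3))
  then have "((\<lambda>t. \<Sum>i<n. c i * (g t * h t ^ i)) has_integral (\<Sum>i<n. c i * 0)) {a..b}"
    by (intro has_integral_sum has_integral_mult_right) auto
  then have "((\<lambda>t. \<Sum>i<n. c i * (g t * h t ^ i)) has_integral 0) {a..b}"
    by simp
  moreover have "(\<Sum>i<n. c i * (g t * h t ^ i)) = (g t)\<^sup>2" if "t \<in> {a..b}" for t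
    using poly[OF that] by (simp add: power2_eq_square sum_distrib_left mult_ac)
  ultimately have "((\<lambda>t. (g t)\<^sup>2) has_integral 0) {a..b}"
    by (rule has_integral_eq[rotated])
  then have "integral {a..b} (\<lambda>t. (g t)\<^sup>2) = 0"
    by (rule integral_unique)
  with assms(1,2,6) show ?thesis
    using integral_eq_0_iff[of a b "\<lambda>t. (g t)\<^sup>2"] by (simp add: continuous_intros)
qed


section \<open>The perturbed system in polar coordinates\<close>

type_synonym coeffs = "nat \<Rightarrow> nat \<Rightarrow> nat \<Rightarrow> real"

definition quartic :: "(nat \<Rightarrow> nat \<Rightarrow> real) \<Rightarrow> real \<Rightarrow> real \<Rightarrow> real" where
  "quartic A x y = (\<Sum>i\<le>4. A i (4 - i) * x ^ i * y ^ (4 - i))"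

lemma quartic_expand:
  "quartic A x y = A 0 4 * y^4 + A 1 3 * x * y^3 + A 2 2 * x^2 * y^2 + A 3 1 * x^3 * y + A 4 0 * x^4"
  by (simp add: quartic_def numeral_eq_Suc atMost_Suc)

lemma quartic_scale: "quartic A (r * x) (r * y) = r^4 * quartic A x y"
  unfolding quartic_expand by (simp add: power_mult_distrib algebra_simps numeral_eq_Suc)

lemma Ppert_quartic: "Ppert lam a k x y = lam k * x + quartic (a k) x y"
  by (simp add: Ppert_def quartic_def)

lemma Qpert_quartic: "Qpert lam b k x y = lam k * y + quartic (b k) x y"
  by (simp add: Qpert_def quartic_def)

definition radial_term :: "coeffs \<Rightarrow> coeffs \<Rightarrow> real \<Rightarrow> real" where
  "radial_term a b \<theta> =
     cos \<theta> * quartic (a 1) (cos \<theta>) (sin \<theta>) + sin \<theta> * quartic (b 1) (cos \<theta>) (sin \<theta>)"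

definition angular_term :: "coeffs \<Rightarrow> coeffs \<Rightarrow> real \<Rightarrow> real" where
  "angular_term a b \<theta> =
     cos \<theta> * (cos \<theta> * quartic (b 1) (cos \<theta>) (sin \<theta>) - sin \<theta> * quartic (a 1) (cos \<theta>) (sin \<theta>))"

lemma polar_identity:
  fixes L A B c s r :: real
  assumes "c\<^sup>2 + s\<^sup>2 = 1" and "r \<noteq> 0"
  shows "(r * c * (L * (r * c) + r^4 * A) + r * s * (L * (r * s) + r^4 * B)) / r
      - r^4 * c * (r * c * (L * (r * s) + r^4 * B) - r * s * (L * (r * c) + r^4 * A)) / r^2
    = L * r + r^4 * (c * A + s * B) - r^7 * (c * (c * B - s * A))"
proof -
  have "(r * c * (L * (r * c) + r^4 * A) + r * s * (L * (r * s) + r^4 * B)) / r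
      - r^4 * c * (r * c * (L * (r * s) + r^4 * B) - r * s * (L * (r * c) + r^4 * A)) / r^2
    = L * r * (c\<^sup>2 + s\<^sup>2) + r^4 * (c * A + s * B) - r^7 * (c * (c * B - s * A))"
    using assms(2) by (simp add: field_simps power2_eq_square numeral_eq_Suc)
  with assms(1) show ?thesis by simp
qed

lemma F1_polar:
  assumes "r \<noteq> 0"
  shows "F1 lam a b \<theta> r = lam 1 * r + r^4 * radial_term a b \<theta> - r^7 * angular_term a b \<theta>"
  using polar_identity[OF sin_cos_squared_add2 assms]
  by (simp add: F1_def Let_def Ppert_quartic Qpert_quartic quartic_scale radial_term_def angular_term_def)

lemma integrand_polar:
  assumes "0 < z" and "3 * z^3 * sin \<theta> < 1"
  shows "inverse (Ysol \<theta> z) * F1 lam a b \<theta> (rsol \<theta> z) =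
    lam 1 * z * (1 - 3 * z^3 * sin \<theta>) + z^4 * radial_term a b \<theta>
    - z^7 * angular_term a b \<theta> / (1 - 3 * z^3 * sin \<theta>)"
proof -
  define t where "t = 1 - 3 * z^3 * sin \<theta>"
  define w where "w = t powr (-1/3)"
  have "t > 0" "w > 0" using assms by (simp_all add: t_def w_def)
  have w3: "w^3 * t = 1"
    using \<open>t > 0\<close> by (simp add: w_def powr_power powr_minus field_simps)
  have Y: "Ysol \<theta> z = w^4" and r: "rsol \<theta> z = z * w"
    using \<open>t > 0\<close> by (simp_all add: Ysol_def rsol_def w_def t_def powr_power)
  have "inverse (w^4) * (lam 1 * (z * w) + (z * w)^4 * X - (z * w)^7 * Z) =
        lam 1 * z * t + z^4 * X - z^7 * Z / t" for X Z
    using \<open>w > 0\<close> \<open>t > 0\<close> w3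
    by (simp add: field_simps power_mult_distrib numeral_eq_Suc) algebra
  then show ?thesis
    using \<open>w > 0\<close> assms by (simp add: Y r F1_polar t_def)
qed

definition radial_cos_part :: "coeffs \<Rightarrow> coeffs \<Rightarrow> real \<Rightarrow> real" where
  "radial_cos_part a b s = a 1 0 4 * s^4 + a 1 2 2 * (1 - s\<^sup>2) * s\<^sup>2 + a 1 4 0 * (1 - s\<^sup>2)\<^sup>2
     + b 1 1 3 * s^4 + b 1 3 1 * (1 - s\<^sup>2) * s\<^sup>2"

definition radial_sin_part :: "coeffs \<Rightarrow> coeffs \<Rightarrow> real \<Rightarrow> real" where
  "radial_sin_part a b c = a 1 1 3 * c\<^sup>2 * (1 - c\<^sup>2) + a 1 3 1 * c^4 + b 1 0 4 * (1 - c\<^sup>2)\<^sup>2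
     + b 1 2 2 * c\<^sup>2 * (1 - c\<^sup>2) + b 1 4 0 * c^4"

definition angular_even_part :: "coeffs \<Rightarrow> coeffs \<Rightarrow> real \<Rightarrow> real" where
  "angular_even_part a b s = (b 1 0 4 - a 1 1 3) * (1 - s\<^sup>2) * s^4
     + (b 1 2 2 - a 1 3 1) * (1 - s\<^sup>2)\<^sup>2 * s\<^sup>2 + b 1 4 0 * (1 - s\<^sup>2)^3"

definition angular_odd_part :: "coeffs \<Rightarrow> coeffs \<Rightarrow> real \<Rightarrow> real" where
  "angular_odd_part a b s = (b 1 1 3 - a 1 2 2) * (1 - s\<^sup>2) * s^3
     + (b 1 3 1 - a 1 4 0) * (1 - s\<^sup>2)\<^sup>2 * s - a 1 0 4 * s^5"

lemma radial_term_split: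
  "radial_term a b \<theta> = cos \<theta> * radial_cos_part a b (sin \<theta>) + sin \<theta> * radial_sin_part a b (cos \<theta>)"
proof -
  have "(cos \<theta>)\<^sup>2 + (sin \<theta>)\<^sup>2 = 1" by simp
  then show ?thesis
    unfolding radial_term_def quartic_expand radial_cos_part_def radial_sin_part_def by algebra
qed

lemma angular_term_split:
  "angular_term a b \<theta> = angular_even_part a b (sin \<theta>) + cos \<theta> * angular_odd_part a b (sin \<theta>)"
proof -
  have "(cos \<theta>)\<^sup>2 + (sin \<theta>)\<^sup>2 = 1" by simp
  then show ?thesis
    unfolding angular_term_def quartic_expand angular_even_part_def angular_odd_part_def by algebra
qed

lemma has_integral_cos_mult_comp_sin:
  assumes "continuous_on {-1..1} f"
  shows "((\<lambda>x. cos x * f (sin x)) has_integral 0) {0..2*pi}"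
proof -
  have "((\<lambda>x. cos x *\<^sub>R f (sin x)) has_integral
      integral {sin 0..sin (2*pi)} f - integral {sin (2*pi)..sin 0} f) {0..2*pi}"
    by (rule has_integral_substitution_general[of "{}" 0 "2*pi" sin "-1" 1 f cos])
       (auto intro!: derivative_eq_intros continuous_intros assms)
  then show ?thesis by simp
qed

lemma has_integral_sin_mult_comp_cos:
  assumes "continuous_on {-1..1} f"
  shows "((\<lambda>x. sin x * f (cos x)) has_integral 0) {0..2*pi}"
proof -
  have "((\<lambda>x. (- sin x) *\<^sub>R f (cos x)) has_integral
      integral {cos 0..cos (2*pi)} f - integral {cos (2*pi)..cos 0} f) {0..2*pi}"
    by (rule has_integral_substitution_general[of "{}" 0 "2*pi" cos "-1" 1 f "\<lambda>x. - sin x"])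
       (auto intro!: derivative_eq_intros continuous_intros assms)
  then have "((\<lambda>x. - sin x * f (cos x)) has_integral 0) {0..2*pi}"
    by simp
  from has_integral_neg[OF this] show ?thesis
    by simp
qed


section \<open>The first order averaged function\<close>

definition angular_resolvent :: "coeffs \<Rightarrow> coeffs \<Rightarrow> real \<Rightarrow> real" where
  "angular_resolvent a b k = integral {0..2*pi} (\<lambda>\<theta>. angular_even_part a b (sin \<theta>) / (1 - k * sin \<theta>))"

lemma f1_reduced:
  assumes "0 < z" "3 * z^3 < 1"
  shows "f1 lam a b z = 2 * pi * lam 1 * z - z^7 * angular_resolvent a b (3 * z^3)"
proof -
  define k where "k = 3 * z^3"
  have "k < 1"
    using assms by (simp add: k_def)
  have k_mult_lt_1: "k * x < 1" if "x \<in> {-1..1}" for x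
  proof -
    have "k * x \<le> k"
      using that assms by (intro mult_left_le) (auto simp: k_def)
    with \<open>k < 1\<close> show ?thesis by linarith
  qed
  then have nz: "1 - k * x \<noteq> 0" if "x \<in> {-1..1}" for x
    using that by fastforce
  define \<phi> where "\<phi> x = z^4 * radial_cos_part a b x - z^7 * angular_odd_part a b x / (1 - k * x)" for x
  define \<psi> where "\<psi> y = z^4 * radial_sin_part a b y - lam 1 * z * k" for y
  have "continuous_on {-1..1} \<phi>"
    unfolding \<phi>_def radial_cos_part_def angular_odd_part_def
    by (intro continuous_intros ballI nz)
  then have int_\<phi>: "((\<lambda>\<theta>. cos \<theta> * \<phi> (sin \<theta>)) has_integral 0) {0..2*pi}"
    by (rule has_integral_cos_mult_comp_sin)
  have "continuous_on {-1..1} \<psi>"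
    unfolding \<psi>_def radial_sin_part_def by (intro continuous_intros)
  then have int_\<psi>: "((\<lambda>\<theta>. sin \<theta> * \<psi> (cos \<theta>)) has_integral 0) {0..2*pi}"
    by (rule has_integral_sin_mult_comp_cos)
  have "continuous_on {0..2*pi} (\<lambda>\<theta>. angular_even_part a b (sin \<theta>) / (1 - k * sin \<theta>))"
    unfolding angular_even_part_def by (intro continuous_intros ballI nz) simp
  then have int_J: "((\<lambda>\<theta>. angular_even_part a b (sin \<theta>) / (1 - k * sin \<theta>)) has_integral
      angular_resolvent a b k) {0..2*pi}"
    unfolding angular_resolvent_def by (intro integrable_integral integrable_continuous_interval)
  have integrand: "inverse (Ysol \<theta> z) * F1 lam a b \<theta> (rsol \<theta> z) =
      lam 1 * z + cos \<theta> * \<phi> (sin \<theta>) + sin \<theta> * \<psi> (cos \<theta>)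
      - z^7 * (angular_even_part a b (sin \<theta>) / (1 - k * sin \<theta>))" for \<theta>
    using integrand_polar[OF assms(1) k_mult_lt_1[of "sin \<theta>", unfolded k_def], of lam a b]
    unfolding radial_term_split angular_term_split \<phi>_def \<psi>_def k_def
    by (simp add: algebra_simps add_divide_distrib)
  have "((\<lambda>\<theta>. inverse (Ysol \<theta> z) * F1 lam a b \<theta> (rsol \<theta> z)) has_integral
      lam 1 * z * (2 * pi) + 0 + 0 - z^7 * angular_resolvent a b k) {0..2*pi}"
    unfolding integrand
    using has_integral_const_real[of "lam 1 * z" 0 "2 * pi"]
    by (intro has_integral_diff has_integral_add has_integral_mult_right int_\<phi> int_\<psi> int_J)
       (simp add: mult.commute)
  moreover have "Ysol (2 * pi) z = 1"
    by (simp add: Ysol_def)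
  ultimately show ?thesis
    by (simp add: f1_def k_def integral_unique)
qed

lemma angular_even_part_expansion:
  obtains c where "\<And>s. angular_even_part a b s = (\<Sum>i<7. c i * s ^ i)"
proof
  define u where "u = b 1 0 4 - a 1 1 3"
  define v where "v = b 1 2 2 - a 1 3 1"
  define w where "w = b 1 4 0"
  show "angular_even_part a b s =
      (\<Sum>i<7. [w, 0, v - 3 * w, 0, u - 2 * v + 3 * w, 0, v - u - w] ! i * s ^ i)" for s
    by (simp add: angular_even_part_def u_def v_def w_def eval_nat_numeral algebra_simps)
qed

lemma angular_resolvent_vanishes_iff:
  "(\<forall>k\<in>{0<..<1}. angular_resolvent a b k = 0) \<longleftrightarrow>
    (\<forall>\<theta>\<in>{0..2*pi}. angular_even_part a b (sin \<theta>) = 0)"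
proof
  assume J0: "\<forall>k\<in>{0<..<1}. angular_resolvent a b k = 0"
  have cont: "continuous_on {0..2*pi} (\<lambda>\<theta>. angular_even_part a b (sin \<theta>))"
    unfolding angular_even_part_def by (intro continuous_intros)
  have "\<forall>\<^sub>F k in at_right 0. k \<in> {0<..<1::real}"
    by (rule eventually_at_right_real) simp
  then have "\<forall>\<^sub>F k in at_right 0.
      integral {0..2*pi} (\<lambda>\<theta>. angular_even_part a b (sin \<theta>) / (1 - k * sin \<theta>)) = 0"
    by eventually_elim (use J0 in \<open>simp add: angular_resolvent_def\<close>)
  then have moments: "integral {0..2*pi} (\<lambda>\<theta>. angular_even_part a b (sin \<theta>) * sin \<theta> ^ i) = 0" for i
    by (intro moments_vanish_if_resolvent_vanishes cont) (auto intro: continuous_intros)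
  obtain c where c: "\<And>s. angular_even_part a b s = (\<Sum>i<7. c i * s ^ i)"
    using angular_even_part_expansion[of a b] by blast
  show "\<forall>\<theta>\<in>{0..2*pi}. angular_even_part a b (sin \<theta>) = 0"
  proof
    fix \<theta> :: real assume "\<theta> \<in> {0..2*pi}"
    show "angular_even_part a b (sin \<theta>) = 0"
      by (rule vanishes_if_moments_vanish[where g = "\<lambda>\<theta>. angular_even_part a b (sin \<theta>)"
          and h = sin, OF _ cont _ c moments \<open>\<theta> \<in> {0..2*pi}\<close>])
        (auto intro: continuous_intros)
  qed
next
  assume E0: "\<forall>\<theta>\<in>{0..2*pi}. angular_even_part a b (sin \<theta>) = 0"
  have "angular_resolvent a b k = integral {0..2*pi} (\<lambda>_. 0)" for k
    unfolding angular_resolvent_def by (rule integral_cong) (simp add: E0)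
  then show "\<forall>k\<in>{0<..<1}. angular_resolvent a b k = 0"
    by simp
qed

lemma angular_even_part_vanishes_iff:
  "(\<forall>\<theta>\<in>{0..2*pi}. angular_even_part a b (sin \<theta>) = 0) \<longleftrightarrow>
    a 1 1 3 = b 1 0 4 \<and> a 1 3 1 = b 1 2 2 \<and> b 1 4 0 = 0"
proof
  assume E0: "\<forall>\<theta>\<in>{0..2*pi}. angular_even_part a b (sin \<theta>) = 0"
  define u where "u = b 1 0 4 - a 1 1 3"
  define v where "v = b 1 2 2 - a 1 3 1"
  have w: "b 1 4 0 = 0"
    using E0[rule_format, of 0] by (simp add: angular_even_part_def)
  have s2: "(sin (pi/4))\<^sup>2 = 1/2"
    by (simp add: sin_45 power_divide)
  have s4: "(sin (pi/4))^4 = 1/4"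
  proof -
    have "(sin (pi/4))^4 = (sin (pi/4))\<^sup>2 * (sin (pi/4))\<^sup>2"
      by algebra
    also have "\<dots> = 1/4"
      unfolding s2 by simp
    finally show ?thesis .
  qed
  have "angular_even_part a b (1/2) = (3 * u + 9 * v + 27 * b 1 4 0) / 64"
    unfolding angular_even_part_def u_def v_def by (simp add: field_simps)
  then have "3 * u + 9 * v = 0"
    using E0[rule_format, of "pi/6"] w by (simp add: sin_30)
  moreover have "angular_even_part a b (sin (pi/4)) = (u + v + b 1 4 0) / 8"
    unfolding angular_even_part_def s2 s4 u_def v_def by (simp add: field_simps)
  then have "u + v = 0"
    using E0[rule_format, of "pi/4"] w by simp
  ultimately show "a 1 1 3 = b 1 0 4 \<and> a 1 3 1 = b 1 2 2 \<and> b 1 4 0 = 0"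
    using w by (simp add: u_def v_def)
next
  assume "a 1 1 3 = b 1 0 4 \<and> a 1 3 1 = b 1 2 2 \<and> b 1 4 0 = 0"
  then show "\<forall>\<theta>\<in>{0..2*pi}. angular_even_part a b (sin \<theta>) = 0"
    by (simp add: angular_even_part_def)
qed

lemma mem_domain_iff:
  fixes z :: real
  shows "z \<in> {0<..<3 powr (-1/3)} \<longleftrightarrow> 0 < z \<and> 3 * z^3 < 1"
proof -
  have "(3 powr (-1/3) :: real)^3 = 3 powr (real 3 * (-1/3))"
    by (rule powr_power) simp
  then have cube: "(3 powr (-1/3) :: real)^3 = 1/3"
    by simp
  have "z < 3 powr (-1/3) \<longleftrightarrow> z^3 < (3 powr (-1/3))^3" if "0 < z"
    using that by (auto intro: power_strict_mono power_less_imp_less_base)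
  with cube show ?thesis
    by auto
qed

lemma f1_vanishes_iff:
  "(\<forall>z\<in>{0<..<3 powr (-1/3)}. f1 lam a b z = 0) \<longleftrightarrow>
    lam 1 = 0 \<and> (\<forall>k\<in>{0<..<1}. angular_resolvent a b k = 0)"
proof
  assume f0: "\<forall>z\<in>{0<..<3 powr (-1/3)}. f1 lam a b z = 0"
  have balance: "2 * pi * lam 1 = (k / 3)\<^sup>2 * angular_resolvent a b k" if "k \<in> {0<..<1}" for k
  proof -
    define z where "z = root 3 (k / 3)"
    have "0 < z" and z3: "3 * z^3 = k"
      using that by (simp_all add: z_def)
    with that have "3 * z^3 < 1" and z7: "z^7 = z * (k / 3)\<^sup>2"
      by (auto simp flip: z3 simp: eval_nat_numeral)
    with \<open>0 < z\<close> have "z \<in> {0<..<3 powr (-1/3)}"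
      using mem_domain_iff by blast
    with f0 have "f1 lam a b z = 0"
      by blast
    with z7 have "z * (2 * pi * lam 1) = z * ((k / 3)\<^sup>2 * angular_resolvent a b k)"
      using f1_reduced[OF \<open>0 < z\<close> \<open>3 * z^3 < 1\<close>, of lam a b] by (simp add: z3 algebra_simps)
    with \<open>0 < z\<close> show ?thesis
      by simp
  qed
  have cont: "continuous_on {0..2*pi} (\<lambda>\<theta>. angular_even_part a b (sin \<theta>))"
    unfolding angular_even_part_def by (intro continuous_intros)
  obtain C where C: "\<And>k. 0 \<le> k \<Longrightarrow> k \<le> 1/2 \<Longrightarrow> \<bar>angular_resolvent a b k\<bar> \<le> C"
    unfolding angular_resolvent_def
    by (rule resolvent_integral_bounded[of 0 "2*pi" _ sin, OF _ cont]) (auto intro: continuous_intros)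
  have "\<forall>\<^sub>F k in at_right 0. k \<in> {0<..<1/2::real}"
    by (rule eventually_at_right_real) simp
  then have "\<forall>\<^sub>F k in at_right 0. \<bar>2 * pi * lam 1\<bar> \<le> C * k"
  proof eventually_elim
    case (elim k)
    then have "k \<in> {0<..<1}" by simp
    have "(k / 3)\<^sup>2 \<le> k"
      using elim by (simp add: power2_eq_square field_simps mult_right_mono)
    have "0 \<le> C"
      using C[of 0] by simp
    have "\<bar>2 * pi * lam 1\<bar> = (k / 3)\<^sup>2 * \<bar>angular_resolvent a b k\<bar>"
      unfolding balance[OF \<open>k \<in> {0<..<1}\<close>] by (simp add: abs_mult)
    also have "\<dots> \<le> (k / 3)\<^sup>2 * C"
      using C[of k] elim by (intro mult_left_mono) auto
    also have "\<dots> \<le> k * C"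
      using \<open>(k / 3)\<^sup>2 \<le> k\<close> \<open>0 \<le> C\<close> by (rule mult_right_mono)
    finally show ?case
      by (simp add: mult.commute)
  qed
  then have "2 * pi * lam 1 = 0"
    by (rule eq_0_if_eventually_abs_le)
  then show "lam 1 = 0 \<and> (\<forall>k\<in>{0<..<1}. angular_resolvent a b k = 0)"
    using balance by auto
next
  assume vanish: "lam 1 = 0 \<and> (\<forall>k\<in>{0<..<1}. angular_resolvent a b k = 0)"
  show "\<forall>z\<in>{0<..<3 powr (-1/3)}. f1 lam a b z = 0"
  proof
    fix z :: real assume "z \<in> {0<..<3 powr (-1/3)}"
    then have "0 < z" "3 * z^3 < 1"
      using mem_domain_iff by blast+
    with vanish show "f1 lam a b z = 0"
      by (simp add: f1_reduced)
  qed
qed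

theorem mainTheorem8:
  fixes lam :: "nat \<Rightarrow> real" and a b :: "nat \<Rightarrow> nat \<Rightarrow> nat \<Rightarrow> real"
  shows "(\<forall>z \<in> {0<..<3 powr (-1/3)}. f1 lam a b z = 0) \<longleftrightarrow>
    (a 1 1 3 = b 1 0 4 \<and> a 1 3 1 = b 1 2 2 \<and> b 1 4 0 = 0 \<and> lam 1 = 0)"
  unfolding f1_vanishes_iff angular_resolvent_vanishes_iff angular_even_part_vanishes_iff
  by blast

end
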